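(* Let $\gamma:Z_1\to Z_2$ be a morphism of $F$-analytic manifolds over a non-Archimedean local field $F$, and let $\mu_i$ be nowhere vanishing smooth measures on $Z_i$. Assume that for every real-valued non-negative $f\in C_c^\infty(Z_1)$ we have $\frac{\gamma_*(f\mu_1)}{\mu_2}\in L^{<\infty}(Z_2)$. Then for every $\epsilon>0$ and every real-valued non-negative $g\in L^{1+\epsilon}(Z_2)$ we have $\gamma^*(g)\in L^1_{loc}(Z_1)$.
   Context: $C_c^\infty(Z_1)$: locally constant compactly supported functions. $\frac{\gamma_*(f\mu_1)}{\mu_2}$ is the Radon–Nikodym derivative of the pushforward measure (the hypothesis includes that it is absolutely continuous). $L^{<\infty}(Z_2)=\bigcap_{1\le t<\infty}L^t(Z_2,\mu_2)$; $L^{1+\epsilon}(Z_2)=L^{1+\epsilon}(Z_2,\mu_2)$; $L^1_{loc}(Z_1)$ is w.r.t. $\mu_1$. $\gamma^*(g)=g\circ\gamma$. *)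

theory Defs
  imports "HOL-Analysis.Analysis" "HOL-Probability.Probability"
begin

text \<open>A non-Archimedean local field: a field F with a non-Archimedean absolute value
  which is non-trivial (non-discrete topology) and for which the closed unit ball is
  (sequentially) compact, i.e. F is locally compact.\<close>
definition nonarch_local_field :: "('f::field \<Rightarrow> real) \<Rightarrow> bool" where
  "nonarch_local_field absF \<longleftrightarrow>
     (\<forall>x. 0 \<le> absF x) \<and> (\<forall>x. absF x = 0 \<longleftrightarrow> x = 0) \<and>
     (\<forall>x y. absF (x * y) = absF x * absF y) \<and>
     (\<forall>x y. absF (x + y) \<le> max (absF x) (absF y)) \<and>
     (\<exists>x. absF x \<noteq> 0 \<and> absF x \<noteq> 1) \<and>
     (\<forall>s::nat \<Rightarrow> 'f. (\<forall>k. absF (s k) \<le> 1) \<longrightarrow>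
        (\<exists>r l. strict_mono r \<and> absF l \<le> 1 \<and> (\<lambda>k. absF (s (r k) - l)) \<longlonglongrightarrow> 0))"

text \<open>F^n is represented as the functions nat => F vanishing outside {..<n}.\<close>
definition Fn :: "nat \<Rightarrow> (nat \<Rightarrow> 'f::zero) set" where
  "Fn n = {x. \<forall>i\<ge>n. x i = 0}"

definition normF :: "('f \<Rightarrow> real) \<Rightarrow> nat \<Rightarrow> (nat \<Rightarrow> 'f) \<Rightarrow> real" where
  "normF absF n x = Max (insert 0 ((\<lambda>i. absF (x i)) ` {..<n}))"

definition openF :: "('f::ab_group_add \<Rightarrow> real) \<Rightarrow> nat \<Rightarrow> (nat \<Rightarrow> 'f) set \<Rightarrow> bool" where
  "openF absF n S \<longleftrightarrow> S \<subseteq> Fn n \<and>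
     (\<forall>x\<in>S. \<exists>r>0. {y\<in>Fn n. normF absF n (y - x) < r} \<subseteq> S)"

definition MI :: "nat \<Rightarrow> (nat \<Rightarrow> nat) set" where
  "MI n = {\<alpha>. \<forall>i\<ge>n. \<alpha> i = 0}"

definition monoF :: "nat \<Rightarrow> (nat \<Rightarrow> nat) \<Rightarrow> (nat \<Rightarrow> 'f::comm_ring_1) \<Rightarrow> 'f" where
  "monoF n \<alpha> y = (\<Prod>i<n. y i ^ \<alpha> i)"

definition has_sumF :: "('f::ab_group_add \<Rightarrow> real) \<Rightarrow> ('i \<Rightarrow> 'f) \<Rightarrow> 'i set \<Rightarrow> 'f \<Rightarrow> bool" where
  "has_sumF absF c I s \<longleftrightarrow>
     (\<forall>e>0. \<exists>S0. finite S0 \<and> S0 \<subseteq> I \<and>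
        (\<forall>S. finite S \<and> S0 \<subseteq> S \<and> S \<subseteq> I \<longrightarrow> absF (sum c S - s) < e))"

definition analyticF :: "('f::field \<Rightarrow> real) \<Rightarrow> nat \<Rightarrow> nat \<Rightarrow> ((nat \<Rightarrow> 'f) \<Rightarrow> (nat \<Rightarrow> 'f))
    \<Rightarrow> (nat \<Rightarrow> 'f) set \<Rightarrow> bool" where
  "analyticF absF n m f U \<longleftrightarrow> openF absF n U \<and> (\<forall>x\<in>U. f x \<in> Fn m) \<and>
     (\<forall>a\<in>U. \<exists>r>0. \<exists>c :: nat \<Rightarrow> (nat \<Rightarrow> nat) \<Rightarrow> 'f.
        \<forall>y\<in>Fn n. normF absF n (y - a) < r \<longrightarrow>
          y \<in> U \<and> (\<forall>j<m. has_sumF absF (\<lambda>\<alpha>. c j \<alpha> * monoF n \<alpha> (y - a)) (MI n) (f y j)))"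

text \<open>An atlas is a set of charts (U, n, \<phi>): \<phi> is a homeomorphism from the open set U of
  the (Hausdorff, second countable) space onto an open subset of F^n; the charts cover
  the space and all transition maps are analytic.\<close>
type_synonym ('z,'f) chart = "'z set \<times> nat \<times> ('z \<Rightarrow> nat \<Rightarrow> 'f)"

definition analytic_manifold :: "('f::field \<Rightarrow> real) \<Rightarrow> ('z::topological_space,'f) chart set \<Rightarrow> bool" where
  "analytic_manifold absF A \<longleftrightarrow>
     (\<forall>z. \<exists>(U,n,\<phi>)\<in>A. z \<in> U) \<and>
     (\<forall>(U,n,\<phi>)\<in>A. open U \<and> inj_on \<phi> U \<and> \<phi> ` U \<subseteq> Fn n \<and> openF absF n (\<phi> ` U) \<and>
        (\<forall>V. openF absF n V \<longrightarrow> open {z\<in>U. \<phi> z \<in> V}) \<and>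
        (\<forall>W. open W \<and> W \<subseteq> U \<longrightarrow> openF absF n (\<phi> ` W))) \<and>
     (\<forall>(U,n,\<phi>)\<in>A. \<forall>(V,m,\<psi>)\<in>A.
        analyticF absF n m (\<psi> \<circ> inv_into U \<phi>) (\<phi> ` (U \<inter> V)))"

definition analytic_morphism :: "('f::field \<Rightarrow> real) \<Rightarrow> ('a::topological_space,'f) chart set
    \<Rightarrow> ('b::topological_space,'f) chart set \<Rightarrow> ('a \<Rightarrow> 'b) \<Rightarrow> bool" where
  "analytic_morphism absF A1 A2 \<gamma> \<longleftrightarrow> continuous_on UNIV \<gamma> \<and>
     (\<forall>(U,n,\<phi>)\<in>A1. \<forall>(V,m,\<psi>)\<in>A2.
        analyticF absF n m (\<psi> \<circ> \<gamma> \<circ> inv_into U \<phi>) (\<phi> ` (U \<inter> \<gamma> -` V)))"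

text \<open>The Haar measure on F^n normalised by giving the closed unit ball measure 1
  (translation invariance + this normalisation determine it uniquely).\<close>
definition haarF :: "('f::field \<Rightarrow> real) \<Rightarrow> nat \<Rightarrow> (nat \<Rightarrow> 'f) measure" where
  "haarF absF n = (THE M. space M = Fn n \<and> sets M = sigma_sets (Fn n) {S. openF absF n S} \<and>
      emeasure M {x\<in>Fn n. normF absF n x \<le> 1} = 1 \<and>
      (\<forall>a\<in>Fn n. \<forall>B\<in>sets M. emeasure M ((\<lambda>x i. x i + a i) ` B) = emeasure M B))"

text \<open>A nowhere vanishing smooth measure: in every chart it is locally a positive
  locally constant (= smooth in the non-Archimedean sense) multiple of Haar measure.\<close>
definition smooth_nv_measure :: "('f::field \<Rightarrow> real) \<Rightarrow> ('z::topological_space,'f) chart set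
    \<Rightarrow> 'z measure \<Rightarrow> bool" where
  "smooth_nv_measure absF A \<mu> \<longleftrightarrow> sets \<mu> = sets borel \<and>
     (\<forall>(U,n,\<phi>)\<in>A. \<forall>a\<in>U. \<exists>W c. open W \<and> a \<in> W \<and> W \<subseteq> U \<and> (0::real) < c \<and>
        (\<forall>B\<in>sets borel. B \<subseteq> W \<longrightarrow>
           emeasure \<mu> B = ennreal c * emeasure (haarF absF n) (\<phi> ` B)))"

definition Cc_infty :: "('z::topological_space \<Rightarrow> real) \<Rightarrow> bool" where
  "Cc_infty f \<longleftrightarrow> (\<forall>x. \<exists>U. open U \<and> x \<in> U \<and> (\<forall>y\<in>U. f y = f x)) \<and>
     (\<exists>K. compact K \<and> (\<forall>x. x \<notin> K \<longrightarrow> f x = 0))"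

end

theory Submission
  imports Defs
begin

text \<open>Every compact K in Z1 lies in a compact open set C: inside a chart, a small closed
  ball of F^n is open because the absolute value is ultrametric, and sequentially compact
  because the unit ball of F is. The indicator of C is locally constant with compact support,
  so by hypothesis the push-forward of 1_C mu1 is h mu2 with h in L^(1 + 1/eps). Hence
  \<^medskip>
  integral over K of (g o gamma) dmu1 \<le> integral of 1_C (g o gamma) dmu1 = integral of h g dmu2
    \<le> integral of (g^(1 + eps) + h^(1 + 1/eps)) dmu2 < \<infinity>,
  \<^medskip>
  where the pointwise bound h g \<le> g^(1 + eps) + h^(1 + 1/eps) (compare h with g^eps) takes
  the place of Hoelder's inequality.\<close>

lemma nonarch_local_field_abs_nonneg: "nonarch_local_field absF \<Longrightarrow> 0 \<le> absF x"
  by (simp add: nonarch_local_field_def)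

lemma nonarch_local_field_abs_zero: "nonarch_local_field absF \<Longrightarrow> absF 0 = 0"
  by (simp add: nonarch_local_field_def)

lemma nonarch_local_field_abs_add_le_max:
  "nonarch_local_field absF \<Longrightarrow> absF (x + y) \<le> max (absF x) (absF y)"
  by (simp add: nonarch_local_field_def)

lemma nonarch_local_field_unit_ball_subseq:
  fixes v :: "nat \<Rightarrow> 'f::field"
  assumes "nonarch_local_field absF" and "\<And>j. absF (v j) \<le> 1"
  shows "\<exists>r l. strict_mono r \<and> absF l \<le> 1 \<and> (\<lambda>j. absF (v (r j) - l)) \<longlonglongrightarrow> 0"
proof -
  have "\<forall>s::nat \<Rightarrow> 'f. (\<forall>j. absF (s j) \<le> 1) \<longrightarrow>
      (\<exists>r l. strict_mono r \<and> absF l \<le> 1 \<and> (\<lambda>j. absF (s (r j) - l)) \<longlonglongrightarrow> 0)"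
    using assms(1) by (simp add: nonarch_local_field_def)
  with assms(2) show ?thesis
    by blast
qed

lemma nonarch_local_field_abs_minus:
  assumes "nonarch_local_field absF"
  shows "absF (- x) = absF x"
proof -
  have mult: "\<And>x y. absF (x * y) = absF x * absF y" and nonneg: "\<And>x. 0 \<le> absF x"
    and zero: "\<And>x. absF x = 0 \<longleftrightarrow> x = 0"
    using assms unfolding nonarch_local_field_def by auto
  have "absF 1 * absF 1 = absF 1" and "absF 1 \<noteq> 0"
    using mult[of 1 1] zero[of 1] by simp_all
  then have "absF 1 = 1"
    by simp
  then have "absF (-1) * absF (-1) = 1"
    using mult[of "-1" "-1"] by simp
  then have "absF (-1) = 1"
    using nonneg[of "-1"] by (metis abs_of_nonneg abs_square_eq_1 power2_eq_square)
  then show ?thesis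
    using mult[of "-1" x] by simp
qed

lemma normF_nonneg: "0 \<le> normF absF n x"
  unfolding normF_def by (simp add: Max_ge_iff)

lemma normF_ge: "i < n \<Longrightarrow> absF (x i) \<le> normF absF n x"
  unfolding normF_def by (simp add: Max_ge_iff)

lemma normF_le: "0 \<le> c \<Longrightarrow> (\<And>i. i < n \<Longrightarrow> absF (x i) \<le> c) \<Longrightarrow> normF absF n x \<le> c"
  unfolding normF_def by auto

lemma normF_le_sum:
  assumes "\<And>x. 0 \<le> absF x"
  shows "normF absF n x \<le> (\<Sum>i<n. absF (x i))"
  using assms by (intro normF_le sum_nonneg) (auto intro: member_le_sum)

lemma normF_diff_le_max:
  assumes "nonarch_local_field absF"
  shows "normF absF n (z - a) \<le> max (normF absF n (z - y)) (normF absF n (y - a))"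
proof (rule normF_le)
  show "0 \<le> max (normF absF n (z - y)) (normF absF n (y - a))"
    by (simp add: normF_nonneg le_max_iff_disj)
  fix i assume i: "i < n"
  have "absF ((z i - y i) + (y i - a i)) \<le> max (absF (z i - y i)) (absF (y i - a i))"
    by (rule nonarch_local_field_abs_add_le_max[OF assms])
  also have "\<dots> \<le> max (normF absF n (z - y)) (normF absF n (y - a))"
    using normF_ge[OF i, of absF "z - y"] normF_ge[OF i, of absF "y - a"] by auto
  finally show "absF ((z - a) i) \<le> max (normF absF n (z - y)) (normF absF n (y - a))"
    by simp
qed

lemma normF_tendsto_zero:
  assumes "\<And>x. 0 \<le> absF x" and "\<And>i. i < n \<Longrightarrow> (\<lambda>j. absF (x j i)) \<longlonglongrightarrow> 0"
  shows "(\<lambda>j. normF absF n (x j)) \<longlonglongrightarrow> 0"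
proof (rule tendsto_sandwich[of "\<lambda>_. 0" _ _ "\<lambda>j. \<Sum>i<n. absF (x j i)"])
  have "(\<lambda>j. \<Sum>i<n. absF (x j i)) \<longlonglongrightarrow> (\<Sum>i<n. 0)"
    using assms(2) by (intro tendsto_sum) auto
  then show "(\<lambda>j. \<Sum>i<n. absF (x j i)) \<longlonglongrightarrow> 0"
    by simp
qed (simp_all add: normF_nonneg normF_le_sum[of absF, OF assms(1)])

lemma nonarch_local_field_abs_le_limit:
  assumes F: "nonarch_local_field absF"
    and bound: "\<And>j. absF (u j) \<le> t" and lim: "(\<lambda>j. absF (u j - c)) \<longlonglongrightarrow> 0"
  shows "absF c \<le> t"
proof -
  have "absF c \<le> t + absF (u j - c)" for j
  proof -
    have "absF c = absF ((c - u j) + u j)"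
      by simp
    also have "\<dots> \<le> max (absF (c - u j)) (absF (u j))"
      by (rule nonarch_local_field_abs_add_le_max[OF F])
    also have "\<dots> \<le> t + absF (u j - c)"
    proof -
      have "absF (c - u j) = absF (u j - c)"
        using nonarch_local_field_abs_minus[OF F, of "u j - c"] by simp
      moreover have "0 \<le> absF (u j)" "0 \<le> absF (u j - c)"
        using nonarch_local_field_abs_nonneg[OF F] by auto
      ultimately show ?thesis
        using bound[of j] by linarith
    qed
    finally show ?thesis .
  qed
  moreover have "(\<lambda>j. t + absF (u j - c)) \<longlonglongrightarrow> t"
    using tendsto_add[OF tendsto_const lim, of t] by simp
  ultimately show ?thesis
    by (intro tendsto_lowerbound[of "\<lambda>j. t + absF (u j - c)" t sequentially])
      (simp_all add: always_eventually)
qed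

lemma nonarch_local_field_coordinatewise_subseq:
  fixes u :: "nat \<Rightarrow> nat \<Rightarrow> 'f::field"
  assumes F: "nonarch_local_field absF" and bound: "\<And>j i. i < n \<Longrightarrow> absF (u j i) \<le> 1"
  shows "\<exists>r c. strict_mono r \<and> (\<forall>i<n. (\<lambda>j. absF (u (r j) i - c i)) \<longlonglongrightarrow> 0)"
  using bound
proof (induction n)
  case 0
  show ?case
    using strict_mono_id by blast
next
  case (Suc n)
  have "\<And>j i. i < n \<Longrightarrow> absF (u j i) \<le> 1"
    using Suc.prems by simp
  then obtain r c where r: "strict_mono r" and c: "\<forall>i<n. (\<lambda>j. absF (u (r j) i - c i)) \<longlonglongrightarrow> 0"
    using Suc.IH by blast
  obtain r' l where r': "strict_mono r'" and l: "(\<lambda>j. absF (u (r (r' j)) n - l)) \<longlonglongrightarrow> 0"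
    using nonarch_local_field_unit_ball_subseq[OF F, of "\<lambda>j. u (r j) n"] Suc.prems by auto
  have "(\<lambda>j. absF (u ((r \<circ> r') j) i - (c(n := l)) i)) \<longlonglongrightarrow> 0" if "i < Suc n" for i
  proof (cases "i = n")
    case False
    with that c have "(\<lambda>j. absF (u (r j) i - c i)) \<longlonglongrightarrow> 0"
      by simp
    then have "((\<lambda>j. absF (u (r j) i - c i)) \<circ> r') \<longlonglongrightarrow> 0"
      using r' by (rule LIMSEQ_subseq_LIMSEQ)
    with False show ?thesis
      by (simp add: comp_def)
  qed (use l in simp)
  moreover have "strict_mono (r \<circ> r')"
    using r r' by (rule strict_mono_o)
  ultimately show ?case
    by blast
qed

lemma nonarch_local_field_ball_subseq_converges:
  fixes s :: "nat \<Rightarrow> nat \<Rightarrow> 'f::field"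
  assumes F: "nonarch_local_field absF"
    and ball: "\<And>j. normF absF n (s j - a) \<le> t" and t1: "t \<le> 1"
  obtains r l where "strict_mono r" and "l \<in> Fn n"
    and "(\<lambda>j. normF absF n (s (r j) - l)) \<longlonglongrightarrow> 0" and "normF absF n (l - a) \<le> t"
proof -
  have coord: "absF (s j i - a i) \<le> t" if "i < n" for i j
    using normF_ge[OF that, of absF "s j - a"] ball[of j] by simp
  have "absF (s j i - a i) \<le> 1" if "i < n" for i j
    using coord[OF that, of j] t1 by linarith
  then obtain r c where r: "strict_mono r"
    and c: "\<And>i. i < n \<Longrightarrow> (\<lambda>j. absF (s (r j) i - a i - c i)) \<longlonglongrightarrow> 0"
    using nonarch_local_field_coordinatewise_subseq[OF F, of n "\<lambda>j i. s j i - a i"] by blast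
  define l where "l = (\<lambda>i. if i < n then a i + c i else 0)"
  have "l \<in> Fn n"
    unfolding l_def Fn_def by simp
  moreover have "(\<lambda>j. normF absF n (s (r j) - l)) \<longlonglongrightarrow> 0"
    using c nonarch_local_field_abs_nonneg[OF F]
    by (intro normF_tendsto_zero) (auto simp: l_def algebra_simps)
  moreover have "normF absF n (l - a) \<le> t"
  proof (rule normF_le)
    show "0 \<le> t"
      using ball[of 0] normF_nonneg order_trans by blast
    show "absF ((l - a) i) \<le> t" if "i < n" for i
      using nonarch_local_field_abs_le_limit[OF F _ c[OF that]] coord that by (simp add: l_def)
  qed
  ultimately show thesis
    by (rule that[OF r])
qed

lemma analytic_manifold_chartD:
  assumes "analytic_manifold absF A" and "(U, n, \<phi>) \<in> A"
  shows "open U" and "inj_on \<phi> U" and "\<phi> ` U \<subseteq> Fn n" and "openF absF n (\<phi> ` U)"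
    and "\<And>V. openF absF n V \<Longrightarrow> open {z\<in>U. \<phi> z \<in> V}"
    and "\<And>W. open W \<Longrightarrow> W \<subseteq> U \<Longrightarrow> openF absF n (\<phi> ` W)"
  using assms unfolding analytic_manifold_def by fast+

lemma openF_closed_ball:
  assumes "nonarch_local_field absF" and "0 < t"
  shows "openF absF n {y\<in>Fn n. normF absF n (y - a) \<le> t}"
  unfolding openF_def
proof (intro conjI ballI exI[of _ t])
  fix y assume y: "y \<in> {y\<in>Fn n. normF absF n (y - a) \<le> t}"
  show "{w\<in>Fn n. normF absF n (w - y) < t} \<subseteq> {y\<in>Fn n. normF absF n (y - a) \<le> t}"
  proof
    fix w assume w: "w \<in> {w\<in>Fn n. normF absF n (w - y) < t}"
    have "normF absF n (w - a) \<le> max (normF absF n (w - y)) (normF absF n (y - a))"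
      by (rule normF_diff_le_max[OF assms(1)])
    with w y show "w \<in> {y\<in>Fn n. normF absF n (y - a) \<le> t}"
      by auto
  qed
qed (use assms(2) in auto)

lemma analytic_manifold_chart_tendsto:
  assumes M: "analytic_manifold absF A" and chart: "(U, n, \<phi>) \<in> A"
    and "p \<in> U" and xU: "\<And>j. x j \<in> U"
    and lim: "(\<lambda>j. normF absF n (\<phi> (x j) - \<phi> p)) \<longlonglongrightarrow> 0"
  shows "x \<longlonglongrightarrow> p"
proof (rule topological_tendstoI)
  fix Q assume "open Q" and "p \<in> Q"
  then have "openF absF n (\<phi> ` (Q \<inter> U))" and "\<phi> p \<in> \<phi> ` (Q \<inter> U)"
    using analytic_manifold_chartD(1,6)[OF M chart] \<open>p \<in> U\<close> by auto
  then obtain e where "e > 0" and ball: "{y\<in>Fn n. normF absF n (y - \<phi> p) < e} \<subseteq> \<phi> ` (Q \<inter> U)"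
    unfolding openF_def by blast
  show "\<forall>\<^sub>F j in sequentially. x j \<in> Q"
    using order_tendstoD(2)[OF lim \<open>e > 0\<close>]
  proof eventually_elim
    case (elim j)
    then have "\<phi> (x j) \<in> \<phi> ` (Q \<inter> U)"
      using ball xU[of j] analytic_manifold_chartD(3)[OF M chart] by blast
    then show "x j \<in> Q"
      using xU[of j] analytic_manifold_chartD(2)[OF M chart] by (auto dest: inj_onD)
  qed
qed

lemma analytic_manifold_compact_open_nhd:
  fixes A :: "('a::{t2_space,second_countable_topology}, 'f::field) chart set" and z :: 'a
  assumes F: "nonarch_local_field absF" and M: "analytic_manifold absF A"
  shows "\<exists>W. open W \<and> compact W \<and> z \<in> W"
proof -
  have "\<exists>(U, n, \<phi>)\<in>A. z \<in> U"
    using M by (simp add: analytic_manifold_def)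
  then obtain U n \<phi> where chart: "(U, n, \<phi>) \<in> A" and "z \<in> U"
    by auto
  note chartD = analytic_manifold_chartD[OF M chart]
  obtain r where "r > 0" and r: "{y\<in>Fn n. normF absF n (y - \<phi> z) < r} \<subseteq> \<phi> ` U"
    using chartD(4) \<open>z \<in> U\<close> unfolding openF_def by blast
  define t where "t = min (r/2) 1"
  have "0 < t" "t < r" "t \<le> 1"
    using \<open>r > 0\<close> by (auto simp: t_def)
  define W where "W = {x\<in>U. \<phi> x \<in> {y\<in>Fn n. normF absF n (y - \<phi> z) \<le> t}}"
  have "open W"
    unfolding W_def by (intro chartD(5) openF_closed_ball F \<open>0 < t\<close>)
  moreover have "z \<in> W"
  proof -
    have "normF absF n (\<phi> z - \<phi> z) \<le> t"
      using nonarch_local_field_abs_zero[OF F] \<open>0 < t\<close> by (intro normF_le) simp_all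
    then show ?thesis
      using \<open>z \<in> U\<close> chartD(3) by (auto simp: W_def)
  qed
  moreover have "seq_compact W"
  proof (rule seq_compactI)
    fix x :: "nat \<Rightarrow> 'a" assume x: "\<forall>j. x j \<in> W"
    then have ball: "\<And>j. normF absF n (\<phi> (x j) - \<phi> z) \<le> t"
      by (simp add: W_def)
    obtain q l where q: "strict_mono q" and "l \<in> Fn n"
      and lim: "(\<lambda>j. normF absF n (\<phi> (x (q j)) - l)) \<longlonglongrightarrow> 0" and "normF absF n (l - \<phi> z) \<le> t"
      by (rule nonarch_local_field_ball_subseq_converges[OF F ball \<open>t \<le> 1\<close>])
    then have "l \<in> {y\<in>Fn n. normF absF n (y - \<phi> z) < r}"
      using \<open>t < r\<close> by simp
    with r obtain p where "p \<in> U" and "\<phi> p = l"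
      by blast
    then have "p \<in> W"
      using \<open>l \<in> Fn n\<close> \<open>normF absF n (l - \<phi> z) \<le> t\<close> by (auto simp: W_def)
    moreover have "(x \<circ> q) \<longlonglongrightarrow> p"
      using x lim \<open>\<phi> p = l\<close>
      by (intro analytic_manifold_chart_tendsto[OF M chart \<open>p \<in> U\<close>]) (auto simp: W_def)
    ultimately show "\<exists>p\<in>W. \<exists>q. strict_mono q \<and> (x \<circ> q) \<longlonglongrightarrow> p"
      using q by blast
  qed
  ultimately show ?thesis
    by (auto simp: seq_compact_eq_compact)
qed

lemma compact_subset_compact_open:
  fixes K :: "'a::topological_space set"
  assumes "compact K" and nhd: "\<And>z::'a. \<exists>W. open W \<and> compact W \<and> z \<in> W"
  shows "\<exists>C. open C \<and> compact C \<and> K \<subseteq> C"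
proof -
  have "K \<subseteq> \<Union>{W. open W \<and> compact W}"
    using nhd by blast
  then obtain T where T: "T \<subseteq> {W. open W \<and> compact W}" "finite T" "K \<subseteq> \<Union>T"
    by (rule compactE[OF \<open>compact K\<close>]) auto
  then have "open (\<Union>T)" and "compact (\<Union>T)"
    by auto
  with T(3) show ?thesis
    by blast
qed

lemma Cc_infty_indicator:
  fixes C :: "'a::t2_space set"
  assumes "open C" and "compact C"
  shows "Cc_infty (indicator C :: 'a \<Rightarrow> real)"
proof -
  have "open (- C)"
    using assms(2) by (simp add: compact_imp_closed open_Compl)
  have "\<exists>U. open U \<and> x \<in> U \<and> (\<forall>y\<in>U. indicator C y = (indicator C x :: real))" for x
  proof (cases "x \<in> C")
    case True
    with \<open>open C\<close> show ?thesis
      by (intro exI[of _ C]) auto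
  next
    case False
    with \<open>open (- C)\<close> show ?thesis
      by (intro exI[of _ "- C"]) auto
  qed
  with assms(2) show ?thesis
    unfolding Cc_infty_def by auto
qed

lemma nn_integral_mult_pushforward_density:
  assumes \<gamma>: "\<gamma> \<in> measurable M N" and [measurable]: "f \<in> borel_measurable M"
    and [measurable]: "g \<in> borel_measurable N" "h \<in> borel_measurable N"
    and push: "distr (density M f) N \<gamma> = density N h"
  shows "(\<integral>\<^sup>+x. f x * g (\<gamma> x) \<partial>M) = (\<integral>\<^sup>+y. h y * g y \<partial>N)"
proof -
  have "(\<integral>\<^sup>+x. f x * g (\<gamma> x) \<partial>M) = (\<integral>\<^sup>+x. g (\<gamma> x) \<partial>density M f)"
    using \<gamma> by (simp add: nn_integral_density)
  also have "\<dots> = (\<integral>\<^sup>+y. g y \<partial>distr (density M f) N \<gamma>)"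
    using \<gamma> by (simp add: nn_integral_distr)
  also have "\<dots> = (\<integral>\<^sup>+y. h y * g y \<partial>N)"
    unfolding push by (simp add: nn_integral_density)
  finally show ?thesis .
qed

lemma mult_le_powr_add_powr:
  fixes g h e :: real
  assumes h: "0 \<le> h" and g: "0 \<le> g" and e: "0 < e"
  shows "h * g \<le> g powr (1 + e) + h powr (1 + 1/e)"
proof (cases "h \<le> g powr e")
  case True
  then have "h * g \<le> g powr e * g"
    using g by (rule mult_right_mono)
  also have "\<dots> = g powr (1 + e)"
    using g by (cases "g = 0") (auto simp: powr_add)
  finally show ?thesis
    by (smt (verit) powr_ge_zero)
next
  case False
  then have "0 < h"
    using powr_ge_zero[of g e] by linarith
  have "g \<le> (g powr e) powr (1/e)"
    using e g by (cases "g = 0") (simp_all add: powr_powr)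
  also have "\<dots> \<le> h powr (1/e)"
    using False e by (intro powr_mono2) auto
  finally have "h * g \<le> h * h powr (1/e)"
    using h by (rule mult_left_mono)
  also have "\<dots> = h powr (1 + 1/e)"
    using \<open>0 < h\<close> by (simp add: powr_add)
  finally show ?thesis
    by (smt (verit) powr_ge_zero)
qed

lemma nn_integral_mult_finite_powr:
  fixes g h :: "'a \<Rightarrow> real"
  assumes "0 < e" and "\<And>y. 0 \<le> g y" and "\<And>y. 0 \<le> h y"
    and "integrable N (\<lambda>y. \<bar>g y\<bar> powr (1 + e))" and "integrable N (\<lambda>y. \<bar>h y\<bar> powr (1 + 1/e))"
  shows "(\<integral>\<^sup>+y. ennreal (h y) * ennreal (g y) \<partial>N) < \<infinity>"
proof -
  have "(\<integral>\<^sup>+y. ennreal (h y) * ennreal (g y) \<partial>N)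
      \<le> (\<integral>\<^sup>+y. ennreal (norm (\<bar>g y\<bar> powr (1 + e) + \<bar>h y\<bar> powr (1 + 1/e))) \<partial>N)"
  proof (rule nn_integral_mono)
    fix y
    have "h y * g y \<le> norm (\<bar>g y\<bar> powr (1 + e) + \<bar>h y\<bar> powr (1 + 1/e))"
      using mult_le_powr_add_powr[of "h y" "g y" e] assms(1-3) by simp
    then show "ennreal (h y) * ennreal (g y)
        \<le> ennreal (norm (\<bar>g y\<bar> powr (1 + e) + \<bar>h y\<bar> powr (1 + 1/e)))"
      using assms(2,3) by (metis ennreal_leI ennreal_mult)
  qed
  also have "\<dots> < \<infinity>"
    using Bochner_Integration.integrable_add[OF assms(4,5)] by (simp only: integrable_iff_bounded)
  finally show ?thesis .
qed

lemma set_integrable_of_nn_integral_finite: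
  fixes u :: "'a \<Rightarrow> real"
  assumes "C \<in> sets M" and "u \<in> borel_measurable M" and "\<And>x. 0 \<le> u x"
    and "(\<integral>\<^sup>+x. indicator C x * ennreal (u x) \<partial>M) < \<infinity>"
  shows "set_integrable M C u"
  unfolding set_integrable_def
  using assms by (intro integrableI_nonneg) (auto simp: indicator_mult_ennreal)

theorem lemma12p2:
  fixes absF :: "'f::field \<Rightarrow> real"
    and A1 :: "('a::{t2_space,second_countable_topology}, 'f) chart set"
    and A2 :: "('b::{t2_space,second_countable_topology}, 'f) chart set"
    and \<gamma> :: "'a \<Rightarrow> 'b"
    and \<mu>1 :: "'a measure" and \<mu>2 :: "'b measure"
  assumes "nonarch_local_field absF"
    and "analytic_manifold absF A1" and "analytic_manifold absF A2"
    and "analytic_morphism absF A1 A2 \<gamma>"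
    and "smooth_nv_measure absF A1 \<mu>1" and "smooth_nv_measure absF A2 \<mu>2"
    and "\<And>f. Cc_infty f \<Longrightarrow> (\<forall>x. 0 \<le> f x) \<Longrightarrow>
           (\<exists>h. h \<in> borel_measurable \<mu>2 \<and> (\<forall>y. 0 \<le> h y) \<and>
                distr (density \<mu>1 (\<lambda>x. ennreal (f x))) \<mu>2 \<gamma> = density \<mu>2 (\<lambda>y. ennreal (h y)) \<and>
                (\<forall>t::real. 1 \<le> t \<longrightarrow> integrable \<mu>2 (\<lambda>y. \<bar>h y\<bar> powr t)))"
  shows "\<forall>\<epsilon>::real. \<epsilon> > 0 \<longrightarrow> (\<forall>g. g \<in> borel_measurable \<mu>2 \<and> (\<forall>y. 0 \<le> g y) \<and>
            integrable \<mu>2 (\<lambda>y. \<bar>g y\<bar> powr (1 + \<epsilon>)) \<longrightarrow>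
            (\<forall>K. compact K \<longrightarrow> set_integrable \<mu>1 K (\<lambda>x. g (\<gamma> x))))"
proof (intro allI impI)
  fix \<epsilon> :: real and g :: "'b \<Rightarrow> real" and K :: "'a set"
  assume "\<epsilon> > 0" and "compact K"
    and g: "g \<in> borel_measurable \<mu>2 \<and> (\<forall>y. 0 \<le> g y) \<and> integrable \<mu>2 (\<lambda>y. \<bar>g y\<bar> powr (1 + \<epsilon>))"
  have sets: "sets \<mu>1 = sets borel" "sets \<mu>2 = sets borel"
    using assms(5,6) unfolding smooth_nv_measure_def by blast+
  have \<gamma>: "\<gamma> \<in> measurable \<mu>1 \<mu>2"
    using assms(4) measurable_cong_sets[OF sets] borel_measurable_continuous_onI
    unfolding analytic_morphism_def by blast
  obtain C where "open C" "compact C" "K \<subseteq> C"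
    using compact_subset_compact_open[OF \<open>compact K\<close> analytic_manifold_compact_open_nhd[OF assms(1,2)]]
    by blast
  then obtain h where h: "h \<in> borel_measurable \<mu>2" "\<forall>y. 0 \<le> h y"
    "distr (density \<mu>1 (indicator C)) \<mu>2 \<gamma> = density \<mu>2 (\<lambda>y. ennreal (h y))"
    "integrable \<mu>2 (\<lambda>y. \<bar>h y\<bar> powr (1 + 1/\<epsilon>))"
    using assms(7)[OF Cc_infty_indicator] \<open>\<epsilon> > 0\<close> by (fastforce simp: ennreal_indicator)
  have "C \<in> sets \<mu>1" "K \<in> sets \<mu>1"
    using sets \<open>open C\<close> \<open>compact K\<close> by (auto simp: compact_imp_closed)
  then have "(\<integral>\<^sup>+x. indicator C x * ennreal (g (\<gamma> x)) \<partial>\<mu>1) = (\<integral>\<^sup>+y. h y * ennreal (g y) \<partial>\<mu>2)"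
    using \<gamma> g h by (intro nn_integral_mult_pushforward_density) auto
  also have "\<dots> < \<infinity>"
    using nn_integral_mult_finite_powr[OF \<open>\<epsilon> > 0\<close>] g h by blast
  finally have "set_integrable \<mu>1 C (\<lambda>x. g (\<gamma> x))"
    using \<open>C \<in> sets \<mu>1\<close> measurable_compose[OF \<gamma>] g by (intro set_integrable_of_nn_integral_finite) auto
  then show "set_integrable \<mu>1 K (\<lambda>x. g (\<gamma> x))"
    using set_integrable_subset \<open>K \<in> sets \<mu>1\<close> \<open>K \<subseteq> C\<close> by blast
qed

end
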